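(* Let $A=(a_{nk})$ be an infinite complex matrix such that $l_A$ contains $\phi$ and $e$. If $l_A$ is deferred Ces\`{a}ro conull, then $A$ is not $l$-replaceable.
   Context: Fix sequences $p=(p(n))$, $q=(q(n))$ of nonnegative integers with $p(n)<q(n)$ for all $n$ and $q(n)\to\infty$. $\delta^j$ denotes the sequence with $1$ in position $j$ and $0$ elsewhere, $\phi$ the linear span of all $\delta^j$, $e=(1,1,1,\dots)$, and $\phi_1$ the span of $\phi$ and $e$. For a matrix $A$, $l_A=\{x : \sum_k a_{nk}x_k \text{ converges for each } n \text{ and } \sum_n|\sum_k a_{nk}x_k|<\infty\}$, an FK-space (complete metrizable locally convex sequence space with continuous coordinates) with its usual topology given by the seminorms $|x_n|$, $\sum_n|\sum_k a_{nk}x_k|$, and $\sup_m|\sum_{k=1}^m a_{nk}x_k|$; $l_A'$ is its continuous dual. $A$ (with $l_A\supseteq\phi$) is called $l$-replaceable if there is a matrix $D=(d_{nk})$ with $l_D=l_A$ and $\sum_n d_{nk}=1$ for every $k$. An FK-space $X\supseteq\phi_1$ is called deferred Ces\`{a}ro conull if for every $f\in X'$, $f(e)=\lim_{n\to\infty}\frac{1}{q(n)-p(n)}\sum_{k=p(n)+1}^{q(n)}\sum_{j=1}^{k}f(\delta^j)$. *)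

theory Defs
  imports "HOL-Analysis.Analysis"
begin

(* Sequences are indexed from 0: coordinate j (0-based) corresponds to the paper's
   coordinate j+1.  Matrices are  nat \<Rightarrow> nat \<Rightarrow> complex, 0-based rows and columns. *)

definition delta :: "nat \<Rightarrow> nat \<Rightarrow> complex" where
  "delta j = (\<lambda>k. if k = j then 1 else 0)"

definition eseq :: "nat \<Rightarrow> complex" where
  "eseq = (\<lambda>_. 1)"

definition lA :: "(nat \<Rightarrow> nat \<Rightarrow> complex) \<Rightarrow> (nat \<Rightarrow> complex) set" where
  "lA A = {x. (\<forall>n. summable (\<lambda>k. A n k * x k)) \<and>
              summable (\<lambda>n. norm (\<Sum>k. A n k * x k))}"

definition lA_seminorms :: "(nat \<Rightarrow> nat \<Rightarrow> complex) \<Rightarrow> ((nat \<Rightarrow> complex) \<Rightarrow> real) set" where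
  "lA_seminorms A =
     range (\<lambda>n x. norm (x n))
     \<union> {\<lambda>x. \<Sum>n. norm (\<Sum>k. A n k * x k)}
     \<union> range (\<lambda>n x. SUP m. norm (\<Sum>k\<le>m. A n k * x k))"

definition lA_top :: "(nat \<Rightarrow> nat \<Rightarrow> complex) \<Rightarrow> (nat \<Rightarrow> complex) topology" where
  "lA_top A = subtopology
     (topology_generated_by
        {{x \<in> lA A. p (\<lambda>k. x k - y k) < r} | p y r. p \<in> lA_seminorms A \<and> y \<in> lA A})
     (lA A)"

definition lA_dual :: "(nat \<Rightarrow> nat \<Rightarrow> complex) \<Rightarrow> ((nat \<Rightarrow> complex) \<Rightarrow> complex) set" where
  "lA_dual A = {f. (\<forall>x\<in>lA A. \<forall>y\<in>lA A. f (\<lambda>k. x k + y k) = f x + f y)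
                 \<and> (\<forall>x\<in>lA A. \<forall>c::complex. f (\<lambda>k. c * x k) = c * f x)
                 \<and> continuous_map (lA_top A) euclidean f}"

(* l_A deferred Cesaro conull (p,q fixed); paper: for every f in l_A',
   f(e) = lim_n 1/(q n - p n) \<Sum>_{k=p n+1}^{q n} \<Sum>_{j=1}^{k} f(\<delta>^j).
   With 0-based coordinates, \<Sum>_{j=1}^{k} f(\<delta>^j) = \<Sum>_{j<k} f(delta j). *)
definition deferred_cesaro_conull ::
  "(nat \<Rightarrow> nat) \<Rightarrow> (nat \<Rightarrow> nat) \<Rightarrow> (nat \<Rightarrow> nat \<Rightarrow> complex) \<Rightarrow> bool" where
  "deferred_cesaro_conull p q A \<longleftrightarrow>
     (\<forall>j. delta j \<in> lA A) \<and> eseq \<in> lA A \<and>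
     (\<forall>f\<in>lA_dual A.
        (\<lambda>n. (1 / of_nat (q n - p n)) *
              (\<Sum>k\<in>{p n + 1..q n}. \<Sum>j<k. f (delta j)))
        \<longlonglongrightarrow> f eseq)"

definition l_replaceable :: "(nat \<Rightarrow> nat \<Rightarrow> complex) \<Rightarrow> bool" where
  "l_replaceable A \<longleftrightarrow>
     (\<forall>j. delta j \<in> lA A) \<and>
     (\<exists>D. lA D = lA A \<and> (\<forall>k. (\<lambda>n. D n k) sums 1))"

end

theory Submission
  imports Defs
begin

(* If some D with l_D = l_A has all column sums equal to 1, then g x = sum_n (D x)_n is a
   continuous linear functional on l_A with g (delta^j) = 1 for every j.  The deferred Cesaro
   means in the conull condition are then exactly (p(n) + q(n) + 1) / 2, which are unbounded
   because q(n) -> infinity, so they cannot converge to g(e).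

   The analytic content is the continuity of g.  The countably many seminorms of l_A make it a
   complete metric space (a Frechet space).  Each row functional x |-> (D x)_n is the pointwise
   limit of its finite sections, which are bounded by coordinate seminorms, so by the
   Banach-Steinhaus theorem (via the Baire category theorem) it is bounded by a finite sum of
   seminorms; a second application to the partial sums sum_{n<J} (D x)_n does the same for g. *)

section \<open>Sequence spaces with a countable family of seminorms\<close>

lemma nonneg_tendsto_zeroI:
  fixes f :: "nat \<Rightarrow> real"
  assumes "\<And>j. 0 \<le> f j" and "\<And>\<epsilon>. \<epsilon> > 0 \<Longrightarrow> \<exists>J. \<forall>j\<ge>J. f j \<le> \<epsilon>"
  shows "f \<longlonglongrightarrow> 0"
proof (rule LIMSEQ_I)
  fix r :: real assume "r > 0"
  then obtain J where "\<forall>j\<ge>J. f j \<le> r / 2"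
    using assms(2)[of "r / 2"] by auto
  then show "\<exists>J. \<forall>j\<ge>J. norm (f j - 0) < r"
    using assms(1) \<open>r > 0\<close> by (intro exI[of _ J]) (auto intro: le_less_trans[of _ "r / 2"])
qed

lemma summable_norm_diff_limit:
  fixes u :: "nat \<Rightarrow> nat \<Rightarrow> 'a::real_normed_vector"
  assumes lim: "\<And>n. (\<lambda>j. u j n) \<longlonglongrightarrow> v n"
    and bound: "\<And>j'. j' \<ge> J \<Longrightarrow>
      summable (\<lambda>n. norm (u j n - u j' n)) \<and> (\<Sum>n. norm (u j n - u j' n)) \<le> \<epsilon>"
  shows "summable (\<lambda>n. norm (u j n - v n))" and "(\<Sum>n. norm (u j n - v n)) \<le> \<epsilon>"
proof -
  have partial: "(\<Sum>n<K. norm (u j n - v n)) \<le> \<epsilon>" for K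
  proof (rule Lim_bounded)
    show "(\<lambda>j'. \<Sum>n<K. norm (u j n - u j' n)) \<longlonglongrightarrow> (\<Sum>n<K. norm (u j n - v n))"
      by (intro tendsto_sum tendsto_norm tendsto_diff tendsto_const lim)
    show "\<forall>j'\<ge>J. (\<Sum>n<K. norm (u j n - u j' n)) \<le> \<epsilon>"
    proof (intro allI impI)
      fix j' assume "j' \<ge> J"
      with bound have "summable (\<lambda>n. norm (u j n - u j' n))" "(\<Sum>n. norm (u j n - u j' n)) \<le> \<epsilon>"
        by auto
      then show "(\<Sum>n<K. norm (u j n - u j' n)) \<le> \<epsilon>"
        using sum_le_suminf[of "\<lambda>n. norm (u j n - u j' n)" "{..<K}"] by simp
    qed
  qed
  show "summable (\<lambda>n. norm (u j n - v n))"
    by (rule summableI_nonneg_bounded[OF norm_ge_zero partial])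
  then show "(\<Sum>n. norm (u j n - v n)) \<le> \<epsilon>"
    using partial by (rule suminf_le_const)
qed

locale seminormed_seq_space =
  fixes X :: "(nat \<Rightarrow> complex) set" and s :: "nat \<Rightarrow> (nat \<Rightarrow> complex) \<Rightarrow> real"
  assumes zero_mem: "(\<lambda>_. 0) \<in> X"
    and add_mem: "x \<in> X \<Longrightarrow> y \<in> X \<Longrightarrow> (\<lambda>k. x k + y k) \<in> X"
    and scale_mem: "x \<in> X \<Longrightarrow> (\<lambda>k. c * x k) \<in> X"
    and seminorm_nonneg: "x \<in> X \<Longrightarrow> 0 \<le> s i x"
    and seminorm_triangle: "x \<in> X \<Longrightarrow> y \<in> X \<Longrightarrow> s i (\<lambda>k. x k + y k) \<le> s i x + s i y"
    and seminorm_scale_le: "x \<in> X \<Longrightarrow> s i (\<lambda>k. c * x k) \<le> norm c * s i x"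
    and seminorms_separate: "x \<in> X \<Longrightarrow> (\<And>i. s i x = 0) \<Longrightarrow> x = (\<lambda>_. 0)"
begin

lemma diff_mem: "x \<in> X \<Longrightarrow> y \<in> X \<Longrightarrow> (\<lambda>k. x k - y k) \<in> X"
  using add_mem[of x "\<lambda>k. (-1) * y k"] scale_mem[of y "-1"] by simp

lemma seminorm_homogeneous:
  assumes "x \<in> X"
  shows "s i (\<lambda>k. c * x k) = norm c * s i x"
proof (cases "c = 0")
  case True
  then show ?thesis
    using seminorm_scale_le[OF assms, of i 0] seminorm_nonneg[OF scale_mem[OF assms], of i 0] by simp
next
  case False
  have "s i x = s i (\<lambda>k. inverse c * (c * x k))"
    using False by (simp add: field_simps)
  also have "\<dots> \<le> norm (inverse c) * s i (\<lambda>k. c * x k)"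
    by (rule seminorm_scale_le[OF scale_mem[OF assms]])
  finally have "s i x \<le> s i (\<lambda>k. c * x k) / norm c"
    by (simp add: norm_inverse divide_inverse mult.commute)
  then have "norm c * s i x \<le> s i (\<lambda>k. c * x k)"
    using False by (simp add: pos_le_divide_eq mult.commute)
  with seminorm_scale_le[OF assms] show ?thesis
    by (simp add: order_antisym)
qed

lemma seminorm_zero: "s i (\<lambda>_. 0) = 0"
  using seminorm_homogeneous[OF zero_mem, of i 0] by simp

lemma seminorm_diff_commute: "x \<in> X \<Longrightarrow> y \<in> X \<Longrightarrow> s i (\<lambda>k. x k - y k) = s i (\<lambda>k. y k - x k)"
  using seminorm_homogeneous[OF diff_mem, of x y i "-1"] by simp

lemma seminorm_diff_triangle:
  "x \<in> X \<Longrightarrow> y \<in> X \<Longrightarrow> z \<in> X \<Longrightarrow>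
    s i (\<lambda>k. x k - z k) \<le> s i (\<lambda>k. x k - y k) + s i (\<lambda>k. y k - z k)"
  using seminorm_triangle[OF diff_mem diff_mem, of x y y z i] by simp

definition seminorm_sum :: "nat \<Rightarrow> (nat \<Rightarrow> complex) \<Rightarrow> real" where
  "seminorm_sum N x = (\<Sum>i\<le>N. s i x)"

lemma seminorm_sum_nonneg: "x \<in> X \<Longrightarrow> 0 \<le> seminorm_sum N x"
  unfolding seminorm_sum_def by (intro sum_nonneg seminorm_nonneg)

lemma seminorm_le_seminorm_sum: "x \<in> X \<Longrightarrow> i \<le> N \<Longrightarrow> s i x \<le> seminorm_sum N x"
  unfolding seminorm_sum_def by (rule member_le_sum) (auto intro: seminorm_nonneg)

lemma seminorm_sum_mono: "x \<in> X \<Longrightarrow> N \<le> N' \<Longrightarrow> seminorm_sum N x \<le> seminorm_sum N' x"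
  unfolding seminorm_sum_def by (rule sum_mono2) (auto intro: seminorm_nonneg)

lemma seminorm_sum_homogeneous: "x \<in> X \<Longrightarrow> seminorm_sum N (\<lambda>k. c * x k) = norm c * seminorm_sum N x"
  unfolding seminorm_sum_def by (simp add: seminorm_homogeneous sum_distrib_left)

definition seminorm_bounded :: "((nat \<Rightarrow> complex) \<Rightarrow> complex) \<Rightarrow> bool" where
  "seminorm_bounded h \<longleftrightarrow> (\<exists>C N. \<forall>x\<in>X. norm (h x) \<le> C * seminorm_sum N x)"

lemma seminorm_boundedE:
  assumes "seminorm_bounded h"
  obtains C N where "C > 0" "\<And>x. x \<in> X \<Longrightarrow> norm (h x) \<le> C * seminorm_sum N x"
proof -
  obtain C N where CN: "\<And>x. x \<in> X \<Longrightarrow> norm (h x) \<le> C * seminorm_sum N x"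
    using assms unfolding seminorm_bounded_def by blast
  have "norm (h x) \<le> (\<bar>C\<bar> + 1) * seminorm_sum N x" if "x \<in> X" for x
    using CN[OF that] mult_right_mono[of C "\<bar>C\<bar> + 1", OF _ seminorm_sum_nonneg[OF that, of N]]
    by linarith
  then show thesis
    using that[of "\<bar>C\<bar> + 1" N] by simp
qed

lemma seminorm_bounded_add:
  assumes "seminorm_bounded f" "seminorm_bounded g"
  shows "seminorm_bounded (\<lambda>x. f x + g x)"
proof -
  obtain C1 N1 where "C1 > 0" and f: "\<And>x. x \<in> X \<Longrightarrow> norm (f x) \<le> C1 * seminorm_sum N1 x"
    using seminorm_boundedE[OF assms(1)] by blast
  obtain C2 N2 where "C2 > 0" and g: "\<And>x. x \<in> X \<Longrightarrow> norm (g x) \<le> C2 * seminorm_sum N2 x"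
    using seminorm_boundedE[OF assms(2)] by blast
  have "norm (f x + g x) \<le> (C1 + C2) * seminorm_sum (max N1 N2) x" if x: "x \<in> X" for x
  proof -
    have "norm (f x + g x) \<le> C1 * seminorm_sum N1 x + C2 * seminorm_sum N2 x"
      using norm_triangle_ineq[of "f x" "g x"] f[OF x] g[OF x] by linarith
    also have "\<dots> \<le> C1 * seminorm_sum (max N1 N2) x + C2 * seminorm_sum (max N1 N2) x"
      using seminorm_sum_mono[OF x] \<open>C1 > 0\<close> \<open>C2 > 0\<close> by (intro add_mono mult_left_mono) auto
    finally show ?thesis
      by (simp add: distrib_right)
  qed
  then show ?thesis
    unfolding seminorm_bounded_def by blast
qed

lemma seminorm_bounded_sum:
  assumes "finite I" "\<And>n. n \<in> I \<Longrightarrow> seminorm_bounded (h n)"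
  shows "seminorm_bounded (\<lambda>x. \<Sum>n\<in>I. h n x)"
  using assms
proof (induction rule: finite_induct)
  case empty
  show ?case
    unfolding seminorm_bounded_def by (intro exI[of _ 0]) simp
next
  case (insert n I)
  then show ?case
    by (simp add: seminorm_bounded_add)
qed

text \<open>The guard is needed because \<open>Metric_space\<close> demands nonnegativity on the whole type.\<close>

definition frechet_dist :: "(nat \<Rightarrow> complex) \<Rightarrow> (nat \<Rightarrow> complex) \<Rightarrow> real" where
  "frechet_dist x y =
     (if x \<in> X \<and> y \<in> X then \<Sum>i. (1/2)^i * min 1 (s i (\<lambda>k. x k - y k)) else 0)"

lemma frechet_term_bounds:
  assumes "x \<in> X" "y \<in> X"
  shows "0 \<le> (1/2::real)^i * min 1 (s i (\<lambda>k. x k - y k))"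
    and "(1/2::real)^i * min 1 (s i (\<lambda>k. x k - y k)) \<le> (1/2)^i"
  using seminorm_nonneg[OF diff_mem[OF assms], of i] by auto

lemma summable_frechet_terms:
  assumes "x \<in> X" "y \<in> X"
  shows "summable (\<lambda>i. (1/2::real)^i * min 1 (s i (\<lambda>k. x k - y k)))"
  by (rule summable_comparison_test'[OF summable_geometric[of "1/2::real"], of 0])
     (use frechet_term_bounds[OF assms] in auto)

lemma frechet_term_le_dist:
  assumes "x \<in> X" "y \<in> X"
  shows "(1/2)^i * min 1 (s i (\<lambda>k. x k - y k)) \<le> frechet_dist x y"
  using sum_le_suminf[OF summable_frechet_terms[OF assms], of "{i}"] frechet_term_bounds[OF assms]
  by (simp add: frechet_dist_def assms)

lemma frechet_dist_triangle:
  assumes "x \<in> X" "y \<in> X" "z \<in> X"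
  shows "frechet_dist x z \<le> frechet_dist x y + frechet_dist y z"
proof -
  have "min 1 (s i (\<lambda>k. x k - z k))
      \<le> min 1 (s i (\<lambda>k. x k - y k)) + min 1 (s i (\<lambda>k. y k - z k))" for i
    using seminorm_diff_triangle[OF assms, of i]
      seminorm_nonneg[OF diff_mem[OF assms(1,2)], of i] seminorm_nonneg[OF diff_mem[OF assms(2,3)], of i]
    by (auto simp: min_def)
  then have "(\<Sum>i. (1/2::real)^i * min 1 (s i (\<lambda>k. x k - z k)))
      \<le> (\<Sum>i. (1/2)^i * min 1 (s i (\<lambda>k. x k - y k)) + (1/2)^i * min 1 (s i (\<lambda>k. y k - z k)))"
    by (intro suminf_le summable_add summable_frechet_terms assms)
       (simp add: distrib_left[symmetric] mult_left_mono)
  then show ?thesis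
    using assms by (simp add: frechet_dist_def suminf_add[OF summable_frechet_terms summable_frechet_terms])
qed

sublocale frechet: Metric_space X frechet_dist
proof
  fix x y z
  show "0 \<le> frechet_dist x y"
    using summable_frechet_terms frechet_term_bounds by (auto simp: frechet_dist_def intro: suminf_nonneg)
  show "frechet_dist x y = frechet_dist y x"
    using seminorm_diff_commute[of x y] by (auto simp: frechet_dist_def)
  assume xyz: "x \<in> X" "y \<in> X"
  show "frechet_dist x y = 0 \<longleftrightarrow> x = y"
  proof
    assume "frechet_dist x y = 0"
    then have "\<forall>i. (1/2::real)^i * min 1 (s i (\<lambda>k. x k - y k)) = 0"
      using suminf_eq_zero_iff[OF summable_frechet_terms] frechet_term_bounds xyz
      by (simp add: frechet_dist_def)
    then have "\<forall>i. s i (\<lambda>k. x k - y k) = 0"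
      by (auto simp: min_def split: if_splits)
    then show "x = y"
      using seminorms_separate[OF diff_mem[OF xyz]] by (simp add: fun_eq_iff)
  qed (simp add: frechet_dist_def seminorm_zero xyz)
  assume "z \<in> X"
  then show "frechet_dist x z \<le> frechet_dist x y + frechet_dist y z"
    using frechet_dist_triangle xyz by blast
qed

lemma frechet_dist_small_imp_seminorm_sum_small:
  assumes "\<eta> > 0"
  obtains r where "r > 0"
    "\<And>x y. x \<in> X \<Longrightarrow> y \<in> X \<Longrightarrow> frechet_dist x y < r \<Longrightarrow> seminorm_sum N (\<lambda>k. x k - y k) < \<eta>"
proof
  define e where "e = min 1 (\<eta> / (2 * (real N + 1)))"
  have e: "0 < e" "e \<le> 1"
    using assms by (auto simp: e_def)
  have "(real N + 1) * e \<le> (real N + 1) * (\<eta> / (2 * (real N + 1)))"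
    by (intro mult_left_mono) (auto simp: e_def)
  also have "\<dots> = \<eta> / 2"
    by (simp add: field_simps)
  finally have e3: "(real N + 1) * e < \<eta>"
    using assms by simp
  show "0 < (1/2::real)^N * e"
    using e by simp
  fix x y assume xy: "x \<in> X" "y \<in> X" and d: "frechet_dist x y < (1/2)^N * e"
  have "s i (\<lambda>k. x k - y k) < e" if "i \<le> N" for i
  proof -
    have "(1/2::real)^N \<le> (1/2)^i"
      using that by (intro power_decreasing) auto
    then have "(1/2::real)^N * e \<le> (1/2)^i * e"
      using e(1) by (intro mult_right_mono) auto
    then have "(1/2::real)^i * min 1 (s i (\<lambda>k. x k - y k)) < (1/2)^i * e"
      using frechet_term_le_dist[OF xy, of i] d by linarith
    then show ?thesis
      using e(2) by (simp add: min_less_iff_disj)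
  qed
  then have "seminorm_sum N (\<lambda>k. x k - y k) \<le> (\<Sum>i\<le>N. e)"
    unfolding seminorm_sum_def by (intro sum_mono less_imp_le) auto
  with e3 show "seminorm_sum N (\<lambda>k. x k - y k) < \<eta>"
    by (simp add: add.commute)
qed

lemma seminorm_sum_small_imp_frechet_dist_small:
  assumes "\<delta> > 0"
  obtains N \<eta> where "\<eta> > 0"
    "\<And>x y. x \<in> X \<Longrightarrow> y \<in> X \<Longrightarrow> seminorm_sum N (\<lambda>k. x k - y k) < \<eta> \<Longrightarrow> frechet_dist x y < \<delta>"
proof -
  obtain N where N: "(1/2::real)^N < \<delta>/2"
    using real_arch_pow_inv[of "\<delta>/2" "1/2"] assms by auto
  have "frechet_dist x y < \<delta>"
    if xy: "x \<in> X" "y \<in> X" and small: "seminorm_sum N (\<lambda>k. x k - y k) < \<delta>/2" for x y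
  proof -
    define t where "t i = (1/2::real)^i * min 1 (s i (\<lambda>k. x k - y k))" for i
    have t: "0 \<le> t i" "t i \<le> (1/2)^i" for i
      unfolding t_def using frechet_term_bounds[OF xy] by auto
    have "t i \<le> min 1 (s i (\<lambda>k. x k - y k))" for i
      unfolding t_def using seminorm_nonneg[OF diff_mem[OF xy], of i]
      by (intro mult_left_le_one_le) (auto simp: power_le_one)
    then have "(\<Sum>i<Suc N. t i) \<le> seminorm_sum N (\<lambda>k. x k - y k)"
      unfolding seminorm_sum_def lessThan_Suc_atMost by (intro sum_mono) (simp add: min_le_iff_disj)
    with small have head: "(\<Sum>i<Suc N. t i) < \<delta>/2"
      by linarith
    have "(\<lambda>i. (1/2::real)^Suc N * (1/2)^i) sums ((1/2)^Suc N * (1 / (1 - 1/2)))"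
      by (intro sums_mult geometric_sums) simp
    then have geo: "(\<lambda>i. (1/2::real)^(i + Suc N)) sums ((1/2)^N)"
      by (simp add: power_add mult.commute)
    have summable_t: "summable t"
      unfolding t_def by (rule summable_frechet_terms[OF xy])
    have "(\<Sum>i. t (i + Suc N)) \<le> (\<Sum>i. (1/2::real)^(i + Suc N))"
      by (intro suminf_le t(2) summable_ignore_initial_segment[OF summable_t] sums_summable[OF geo])
    then have tail: "(\<Sum>i. t (i + Suc N)) \<le> (1/2)^N"
      using sums_unique[OF geo] by simp
    have "frechet_dist x y = suminf t"
      using xy by (simp add: frechet_dist_def t_def[abs_def])
    also have "\<dots> = (\<Sum>i. t (i + Suc N)) + (\<Sum>i<Suc N. t i)"
      by (rule suminf_split_initial_segment[OF summable_t])
    finally have "frechet_dist x y = (\<Sum>i. t (i + Suc N)) + (\<Sum>i<Suc N. t i)" .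
    with head tail N show ?thesis
      by linarith
  qed
  with assms that[of "\<delta>/2" N] show thesis
    by simp
qed

lemma mcomplete_if_seminorm_complete:
  assumes "\<And>\<sigma>. (\<And>j. \<sigma> j \<in> X) \<Longrightarrow>
      (\<And>i \<epsilon>. \<epsilon> > 0 \<Longrightarrow> \<exists>J. \<forall>j\<ge>J. \<forall>j'\<ge>J. s i (\<lambda>k. \<sigma> j k - \<sigma> j' k) < \<epsilon>) \<Longrightarrow>
      \<exists>x\<in>X. \<forall>i. (\<lambda>j. s i (\<lambda>k. \<sigma> j k - x k)) \<longlonglongrightarrow> 0"
  shows "frechet.mcomplete"
  unfolding frechet.mcomplete_def
proof (intro allI impI)
  fix \<sigma> assume cauchy: "frechet.MCauchy \<sigma>"
  then have mem: "\<And>j. \<sigma> j \<in> X"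
    by (auto simp: frechet.MCauchy_def)
  have seminorm_cauchy: "\<exists>J. \<forall>j\<ge>J. \<forall>j'\<ge>J. s i (\<lambda>k. \<sigma> j k - \<sigma> j' k) < \<epsilon>"
    if "\<epsilon> > 0" for i \<epsilon>
  proof -
    obtain r where "r > 0" and r: "\<And>x y. x \<in> X \<Longrightarrow> y \<in> X \<Longrightarrow> frechet_dist x y < r \<Longrightarrow>
        seminorm_sum i (\<lambda>k. x k - y k) < \<epsilon>"
      using frechet_dist_small_imp_seminorm_sum_small[OF \<open>\<epsilon> > 0\<close>] by metis
    then obtain J where "\<forall>j j'. J \<le> j \<longrightarrow> J \<le> j' \<longrightarrow> frechet_dist (\<sigma> j) (\<sigma> j') < r"
      using cauchy by (auto simp: frechet.MCauchy_def)
    then show ?thesis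
      using r mem seminorm_le_seminorm_sum[OF diff_mem[OF mem mem]] by (meson le_less_trans order_refl)
  qed
  have "\<exists>x\<in>X. \<forall>i. (\<lambda>j. s i (\<lambda>k. \<sigma> j k - x k)) \<longlonglongrightarrow> 0"
    by (rule assms) (use mem seminorm_cauchy in auto)
  then obtain x where x: "x \<in> X" and conv: "\<And>i. (\<lambda>j. s i (\<lambda>k. \<sigma> j k - x k)) \<longlonglongrightarrow> 0"
    by blast
  have "\<forall>\<^sub>F j in sequentially. frechet_dist (\<sigma> j) x < \<epsilon>" if "\<epsilon> > 0" for \<epsilon>
  proof -
    obtain N \<eta> where "\<eta> > 0" and \<eta>: "\<And>y. y \<in> X \<Longrightarrow> seminorm_sum N (\<lambda>k. y k - x k) < \<eta> \<Longrightarrow>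
        frechet_dist y x < \<epsilon>"
      using seminorm_sum_small_imp_frechet_dist_small[OF \<open>\<epsilon> > 0\<close>] x by metis
    have "(\<lambda>j. seminorm_sum N (\<lambda>k. \<sigma> j k - x k)) \<longlonglongrightarrow> 0"
      unfolding seminorm_sum_def using tendsto_sum[of "{..N}", OF conv] by simp
    then have "\<forall>\<^sub>F j in sequentially. seminorm_sum N (\<lambda>k. \<sigma> j k - x k) < \<eta>"
      using \<open>\<eta> > 0\<close> by (rule order_tendstoD)
    then show ?thesis
      by eventually_elim (use \<eta> mem in blast)
  qed
  then show "\<exists>x. limitin frechet.mtopology \<sigma> x sequentially"
    using x mem by (auto simp: frechet.limitin_metric)
qed

lemma seminorm_bounded_tendsto:
  assumes "seminorm_bounded h"
    and diff: "\<And>x y. x \<in> X \<Longrightarrow> y \<in> X \<Longrightarrow> h (\<lambda>k. x k - y k) = h x - h y"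
    and lim: "limitin frechet.mtopology \<sigma> x sequentially"
  shows "(\<lambda>j. h (\<sigma> j)) \<longlonglongrightarrow> h x"
proof (rule tendstoI)
  fix \<epsilon> :: real assume "\<epsilon> > 0"
  obtain C N where "C > 0" and C: "\<And>x. x \<in> X \<Longrightarrow> norm (h x) \<le> C * seminorm_sum N x"
    using seminorm_boundedE[OF assms(1)] by blast
  have "\<epsilon> / C > 0"
    using \<open>\<epsilon> > 0\<close> \<open>C > 0\<close> by simp
  then obtain r where "r > 0" and r: "\<And>x y. x \<in> X \<Longrightarrow> y \<in> X \<Longrightarrow> frechet_dist x y < r \<Longrightarrow>
      seminorm_sum N (\<lambda>k. x k - y k) < \<epsilon> / C"
    using frechet_dist_small_imp_seminorm_sum_small by blast
  have x: "x \<in> X"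
    using lim by (simp add: frechet.limitin_metric)
  have "\<forall>\<^sub>F j in sequentially. \<sigma> j \<in> X \<and> frechet_dist (\<sigma> j) x < r"
    using lim \<open>r > 0\<close> by (simp add: frechet.limitin_metric)
  then show "\<forall>\<^sub>F j in sequentially. dist (h (\<sigma> j)) (h x) < \<epsilon>"
  proof eventually_elim
    case (elim j)
    then have "dist (h (\<sigma> j)) (h x) \<le> C * seminorm_sum N (\<lambda>k. \<sigma> j k - x k)"
      using C[OF diff_mem] diff x by (simp add: dist_norm)
    also have "\<dots> < C * (\<epsilon> / C)"
      using r[of "\<sigma> j" x] elim x \<open>C > 0\<close> by (intro mult_strict_left_mono) auto
    finally show ?case
      using \<open>C > 0\<close> by simp
  qed
qed

lemma closedin_uniform_sublevel:
  assumes "\<And>j. seminorm_bounded (h j)"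
    and "\<And>j x y. x \<in> X \<Longrightarrow> y \<in> X \<Longrightarrow> h j (\<lambda>k. x k - y k) = h j x - h j y"
  shows "closedin frechet.mtopology {x \<in> X. \<forall>j. norm (h j x) \<le> M}"
  unfolding frechet.metric_closedin_iff_sequentially_closed
proof (intro conjI allI impI)
  fix \<sigma> x assume \<sigma>: "range \<sigma> \<subseteq> {x \<in> X. \<forall>j. norm (h j x) \<le> M} \<and> limitin frechet.mtopology \<sigma> x sequentially"
  have "norm (h j x) \<le> M" for j
  proof (rule Lim_bounded)
    show "(\<lambda>n. norm (h j (\<sigma> n))) \<longlonglongrightarrow> norm (h j x)"
      by (rule tendsto_norm, rule seminorm_bounded_tendsto[of "h j"]) (use assms \<sigma> in auto)
    show "\<forall>n\<ge>0. norm (h j (\<sigma> n)) \<le> M"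
      using \<sigma> by auto
  qed
  then show "x \<in> {x \<in> X. \<forall>j. norm (h j x) \<le> M}"
    using \<sigma> frechet.limitin_mspace by blast
qed auto

lemma bounded_near_zero_imp_seminorm_bound:
  assumes scale: "\<And>x c. x \<in> X \<Longrightarrow> h (\<lambda>k. c * x k) = c * h x"
    and near: "\<And>z. z \<in> X \<Longrightarrow> seminorm_sum N z < \<eta> \<Longrightarrow> norm (h z) \<le> M"
    and "\<eta> > 0" and x: "x \<in> X"
  shows "norm (h x) \<le> 2 * M / \<eta> * seminorm_sum N x"
proof -
  have scaled: "t * norm (h x) \<le> M" if "t \<ge> 0" "t * seminorm_sum N x < \<eta>" for t :: real
    using near[OF scale_mem[OF x], of "complex_of_real t"] that scale[OF x]
    by (simp add: seminorm_sum_homogeneous[OF x] norm_mult)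
  show ?thesis
  proof (cases "seminorm_sum N x = 0")
    case True
    have "M \<ge> 0"
      using scaled[of 0] True \<open>\<eta> > 0\<close> by simp
    have "h x = 0"
    proof (rule ccontr)
      assume "h x \<noteq> 0"
      then show False
        using scaled[of "(M + 1) / norm (h x)"] True \<open>\<eta> > 0\<close> \<open>M \<ge> 0\<close> by simp
    qed
    then show ?thesis
      using True by simp
  next
    case False
    then have q: "seminorm_sum N x > 0"
      using seminorm_sum_nonneg[OF x, of N] by simp
    have "\<eta> / (2 * seminorm_sum N x) * norm (h x) \<le> M"
      using q \<open>\<eta> > 0\<close> by (intro scaled) simp_all
    then show ?thesis
      using q \<open>\<eta> > 0\<close> by (simp add: field_simps)
  qed
qed

lemma seminorm_bounded_pointwise_limit:
  assumes complete: "frechet.mcomplete"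
    and diff: "\<And>j x y. x \<in> X \<Longrightarrow> y \<in> X \<Longrightarrow> h j (\<lambda>k. x k - y k) = h j x - h j y"
    and scale: "\<And>j x c. x \<in> X \<Longrightarrow> h j (\<lambda>k. c * x k) = c * h j x"
    and bounded: "\<And>j. seminorm_bounded (h j)"
    and lim: "\<And>x. x \<in> X \<Longrightarrow> (\<lambda>j. h j x) \<longlonglongrightarrow> H x"
  shows "seminorm_bounded H"
proof -
  define F where "F m = {x \<in> X. \<forall>j. norm (h j x) \<le> real m}" for m :: nat
  have closed: "closedin frechet.mtopology (F m)" for m
    unfolding F_def by (rule closedin_uniform_sublevel[OF bounded diff])
  have cover: "\<Union> (range F) = X"
  proof
    show "X \<subseteq> \<Union> (range F)"
    proof
      fix x assume x: "x \<in> X"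
      obtain K where "\<forall>j. norm (h j x) \<le> K"
        using BseqE[OF convergent_imp_Bseq[OF convergentI[OF lim[OF x]]]] by blast
      then have "\<forall>j. norm (h j x) \<le> real (nat \<lceil>K\<rceil>)"
        by (meson order_trans real_nat_ceiling_ge)
      then have "x \<in> F (nat \<lceil>K\<rceil>)"
        using x by (simp add: F_def)
      then show "x \<in> \<Union> (range F)"
        by blast
    qed
  qed (auto simp: F_def)
  have "\<exists>m. frechet.mtopology interior_of F m \<noteq> {}"
  proof (rule ccontr)
    assume "\<nexists>m. frechet.mtopology interior_of F m \<noteq> {}"
    then have "frechet.mtopology interior_of \<Union> (range F) = {}"
      using closed by (intro frechet.metric_Baire_category_alt[OF complete]) auto
    moreover have "frechet.mtopology interior_of X = X"
      using interior_of_topspace[of frechet.mtopology] by simp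
    ultimately show False
      using cover zero_mem by simp
  qed
  then obtain m x0 \<epsilon> where x0: "x0 \<in> X" and "\<epsilon> > 0" and ball: "frechet.mball x0 \<epsilon> \<subseteq> F m"
    unfolding frechet.metric_interior_of by blast
  obtain N \<eta> where "\<eta> > 0" and \<eta>: "\<And>x y. x \<in> X \<Longrightarrow> y \<in> X \<Longrightarrow>
      seminorm_sum N (\<lambda>k. x k - y k) < \<eta> \<Longrightarrow> frechet_dist x y < \<epsilon>"
    by (rule seminorm_sum_small_imp_frechet_dist_small[OF \<open>\<epsilon> > 0\<close>]) blast
  have near: "norm (h j z) \<le> 2 * real m" if z: "z \<in> X" "seminorm_sum N z < \<eta>" for j z
  proof -
    define y where "y = (\<lambda>k. z k + x0 k)"
    have y: "y \<in> X" and yz: "(\<lambda>k. y k - x0 k) = z"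
      using add_mem[OF z(1) x0] by (auto simp: y_def)
    have "frechet_dist x0 y < \<epsilon>"
      using \<eta>[OF y x0] z(2) frechet.commute yz by simp
    then have "y \<in> F m" "x0 \<in> F m"
      using ball x0 y \<open>\<epsilon> > 0\<close> by auto
    then have "norm (h j y) \<le> real m" "norm (h j x0) \<le> real m"
      by (auto simp: F_def)
    moreover have "norm (h j z) \<le> norm (h j y) + norm (h j x0)"
      using diff[OF y x0] yz norm_triangle_ineq4[of "h j y" "h j x0"] by simp
    ultimately show ?thesis
      by linarith
  qed
  have "norm (H x) \<le> 2 * (2 * real m) / \<eta> * seminorm_sum N x" if x: "x \<in> X" for x
  proof (rule Lim_bounded)
    show "(\<lambda>j. norm (h j x)) \<longlonglongrightarrow> norm (H x)"
      by (rule tendsto_norm[OF lim[OF x]])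
    show "\<forall>j\<ge>0. norm (h j x) \<le> 2 * (2 * real m) / \<eta> * seminorm_sum N x"
      using bounded_near_zero_imp_seminorm_bound[where h="h j" for j, OF scale near \<open>\<eta> > 0\<close> x] by blast
  qed
  then show ?thesis
    unfolding seminorm_bounded_def by blast
qed

end

section \<open>The space \<open>l\<^sub>A\<close> and its seminorms\<close>

definition row_sum :: "(nat \<Rightarrow> nat \<Rightarrow> complex) \<Rightarrow> nat \<Rightarrow> (nat \<Rightarrow> complex) \<Rightarrow> complex" where
  "row_sum A n x = (\<Sum>k. A n k * x k)"

definition row_partial_sum ::
  "(nat \<Rightarrow> nat \<Rightarrow> complex) \<Rightarrow> nat \<Rightarrow> nat \<Rightarrow> (nat \<Rightarrow> complex) \<Rightarrow> complex" where
  "row_partial_sum A n m x = (\<Sum>k\<le>m. A n k * x k)"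

lemma lA_iff:
  "x \<in> lA A \<longleftrightarrow> (\<forall>n. summable (\<lambda>k. A n k * x k)) \<and> summable (\<lambda>n. norm (row_sum A n x))"
  by (simp add: lA_def row_sum_def)

lemma row_partial_sum_tendsto:
  "summable (\<lambda>k. A n k * x k) \<Longrightarrow> (\<lambda>m. row_partial_sum A n m x) \<longlonglongrightarrow> row_sum A n x"
  unfolding row_partial_sum_def row_sum_def by (rule summable_LIMSEQ')

lemma row_partial_sum_add: "row_partial_sum A n m (\<lambda>k. x k + y k) = row_partial_sum A n m x + row_partial_sum A n m y"
  by (simp add: row_partial_sum_def distrib_left sum.distrib)

lemma row_partial_sum_diff: "row_partial_sum A n m (\<lambda>k. x k - y k) = row_partial_sum A n m x - row_partial_sum A n m y"
  by (simp add: row_partial_sum_def right_diff_distrib sum_subtractf)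

lemma row_partial_sum_scale: "row_partial_sum A n m (\<lambda>k. c * x k) = c * row_partial_sum A n m x"
  by (simp add: row_partial_sum_def sum_distrib_left algebra_simps)

lemma row_sum_add:
  assumes "x \<in> lA A" "y \<in> lA A"
  shows "row_sum A n (\<lambda>k. x k + y k) = row_sum A n x + row_sum A n y"
  using assms unfolding lA_iff row_sum_def by (simp add: distrib_left suminf_add)

lemma row_sum_scale:
  assumes "x \<in> lA A"
  shows "row_sum A n (\<lambda>k. c * x k) = c * row_sum A n x"
  using assms suminf_mult[of "\<lambda>k. A n k * x k" c] unfolding lA_iff row_sum_def
  by (simp add: algebra_simps)

lemma row_sum_diff:
  assumes "x \<in> lA A" "y \<in> lA A"
  shows "row_sum A n (\<lambda>k. x k - y k) = row_sum A n x - row_sum A n y"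
  using assms unfolding lA_iff row_sum_def by (simp add: right_diff_distrib suminf_diff)

lemma lA_add_mem:
  assumes "x \<in> lA A" "y \<in> lA A"
  shows "(\<lambda>k. x k + y k) \<in> lA A"
proof -
  have "summable (\<lambda>n. norm (row_sum A n x) + norm (row_sum A n y))"
    using assms by (auto simp: lA_iff intro: summable_add)
  then have "summable (\<lambda>n. norm (row_sum A n (\<lambda>k. x k + y k)))"
    by (rule summable_comparison_test') (simp add: row_sum_add[OF assms] norm_triangle_ineq)
  with assms show ?thesis
    by (auto simp: lA_iff distrib_left intro: summable_add)
qed

lemma lA_scale_mem:
  assumes "x \<in> lA A"
  shows "(\<lambda>k. c * x k) \<in> lA A"
proof -
  have "summable (\<lambda>n. norm c * norm (row_sum A n x))"
    using assms by (auto simp: lA_iff intro: summable_mult)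
  then have "summable (\<lambda>n. norm (row_sum A n (\<lambda>k. c * x k)))"
    by (simp add: row_sum_scale[OF assms] norm_mult)
  moreover have "summable (\<lambda>k. A n k * (c * x k))" for n
    using summable_mult[of "\<lambda>k. A n k * x k" c] assms by (simp add: lA_iff algebra_simps)
  ultimately show ?thesis
    by (simp add: lA_iff)
qed

text \<open>The seminorms of \<open>lA_seminorms\<close>, enumerated by one index: \<open>0\<close> gives the \<open>\<ell>\<^sup>1\<close>-norm
  of \<open>A x\<close>, \<open>2 k + 1\<close> the coordinate \<open>\<bar>x k\<bar>\<close>, and \<open>2 n + 2\<close> the supremum of the partial
  sums of row \<open>n\<close>.\<close>

definition lA_seminorm :: "(nat \<Rightarrow> nat \<Rightarrow> complex) \<Rightarrow> nat \<Rightarrow> (nat \<Rightarrow> complex) \<Rightarrow> real" where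
  "lA_seminorm A i x =
     (if i = 0 then \<Sum>n. norm (row_sum A n x)
      else if odd i then norm (x ((i - 1) div 2))
      else SUP m. norm (row_partial_sum A ((i - 2) div 2) m x))"

lemma lA_seminorm_l1: "lA_seminorm A 0 x = (\<Sum>n. norm (row_sum A n x))"
  by (simp add: lA_seminorm_def)

lemma lA_seminorm_coord: "lA_seminorm A (Suc (2 * k)) x = norm (x k)"
  by (simp add: lA_seminorm_def)

lemma lA_seminorm_row: "lA_seminorm A (Suc (Suc (2 * n))) x = (SUP m. norm (row_partial_sum A n m x))"
  by (simp add: lA_seminorm_def)

lemma lA_seminorm_index_cases:
  obtains "i = 0" | k where "i = Suc (2 * k)" | n where "i = Suc (Suc (2 * n))"
proof (cases "even i")
  case True
  then obtain m where "i = 2 * m"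
    by blast
  then show ?thesis
    using that(1) that(3)[of "m - 1"] by (cases m) auto
next
  case False
  then obtain k where "i = 2 * k + 1"
    using oddE by blast
  then show ?thesis
    using that(2) by simp
qed

lemma bdd_above_row_partial_sums:
  assumes "x \<in> lA A"
  shows "bdd_above (range (\<lambda>m. norm (row_partial_sum A n m x)))"
proof -
  have "Bseq (\<lambda>m. row_partial_sum A n m x)"
    using assms by (intro convergent_imp_Bseq convergentI[OF row_partial_sum_tendsto]) (simp add: lA_iff)
  then obtain K where "\<forall>m. norm (row_partial_sum A n m x) \<le> K"
    using BseqE by blast
  then show ?thesis
    by (intro bdd_aboveI2) auto
qed

lemma norm_row_partial_sum_le:
  "x \<in> lA A \<Longrightarrow> norm (row_partial_sum A n m x) \<le> lA_seminorm A (Suc (Suc (2 * n))) x"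
  unfolding lA_seminorm_row by (rule cSUP_upper[OF UNIV_I bdd_above_row_partial_sums])

lemma norm_row_sum_le:
  assumes "x \<in> lA A"
  shows "norm (row_sum A n x) \<le> lA_seminorm A (Suc (Suc (2 * n))) x"
proof (rule Lim_bounded)
  show "(\<lambda>m. norm (row_partial_sum A n m x)) \<longlonglongrightarrow> norm (row_sum A n x)"
    using assms by (intro tendsto_norm row_partial_sum_tendsto) (simp add: lA_iff)
  show "\<forall>m\<ge>0. norm (row_partial_sum A n m x) \<le> lA_seminorm A (Suc (Suc (2 * n))) x"
    using norm_row_partial_sum_le[OF assms] by blast
qed

interpretation lA: seminormed_seq_space "lA A" "lA_seminorm A" for A
proof
  show "(\<lambda>_. 0) \<in> lA A"
    by (simp add: lA_iff row_sum_def)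
  fix x y i c assume x: "x \<in> lA A"
  show "(\<lambda>k. c * x k) \<in> lA A"
    using x by (rule lA_scale_mem)
  show "0 \<le> lA_seminorm A i x"
  proof (cases i rule: lA_seminorm_index_cases)
    case 1
    then show ?thesis
      using x by (simp add: lA_seminorm_l1 lA_iff suminf_nonneg)
  next
    case (3 n)
    then show ?thesis
      using norm_row_partial_sum_le[OF x, of n 0] norm_ge_zero order_trans by blast
  qed (simp add: lA_seminorm_coord)
  show "lA_seminorm A i (\<lambda>k. c * x k) \<le> norm c * lA_seminorm A i x"
  proof (cases i rule: lA_seminorm_index_cases)
    case 1
    then show ?thesis
      using x by (simp add: lA_seminorm_l1 row_sum_scale norm_mult suminf_mult lA_iff)
  next
    case (3 n)
    have "norm (row_partial_sum A n m (\<lambda>k. c * x k))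
        \<le> norm c * (SUP m. norm (row_partial_sum A n m x))" for m
      using norm_row_partial_sum_le[OF x, of n m]
      by (simp add: lA_seminorm_row row_partial_sum_scale norm_mult mult_left_mono)
    then show ?thesis
      unfolding 3 lA_seminorm_row by (intro cSUP_least) auto
  qed (simp add: lA_seminorm_coord norm_mult)
  show "x = (\<lambda>_. 0)" if "\<And>i. lA_seminorm A i x = 0"
    using that[of "Suc (2 * k)" for k] by (simp add: lA_seminorm_coord fun_eq_iff)
  assume y: "y \<in> lA A"
  show "(\<lambda>k. x k + y k) \<in> lA A"
    using x y by (rule lA_add_mem)
  show "lA_seminorm A i (\<lambda>k. x k + y k) \<le> lA_seminorm A i x + lA_seminorm A i y"
  proof (cases i rule: lA_seminorm_index_cases)
    case 1
    have "(\<Sum>n. norm (row_sum A n (\<lambda>k. x k + y k))) \<le> (\<Sum>n. norm (row_sum A n x) + norm (row_sum A n y))"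
      using lA_add_mem[OF x y] x y
      by (intro suminf_le) (auto simp: lA_iff row_sum_add norm_triangle_ineq intro: summable_add)
    also have "\<dots> = (\<Sum>n. norm (row_sum A n x)) + (\<Sum>n. norm (row_sum A n y))"
      using x y by (intro suminf_add[symmetric]) (auto simp: lA_iff)
    finally show ?thesis
      using 1 by (simp add: lA_seminorm_l1)
  next
    case (3 n)
    have "norm (row_partial_sum A n m (\<lambda>k. x k + y k))
        \<le> (SUP m. norm (row_partial_sum A n m x)) + (SUP m. norm (row_partial_sum A n m y))" for m
      using norm_row_partial_sum_le[OF x, of n m] norm_row_partial_sum_le[OF y, of n m]
        norm_triangle_ineq[of "row_partial_sum A n m x" "row_partial_sum A n m y"]
      by (simp add: lA_seminorm_row row_partial_sum_add)
    then show ?thesis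
      unfolding 3 lA_seminorm_row by (intro cSUP_least) auto
  qed (simp add: lA_seminorm_coord norm_triangle_ineq)
qed

lemma lA_seminorm_in_lA_seminorms: "lA_seminorm A i \<in> lA_seminorms A"
proof (cases i rule: lA_seminorm_index_cases)
  case 1
  then show ?thesis
    by (simp add: lA_seminorms_def lA_seminorm_l1 row_sum_def fun_eq_iff)
next
  case (2 k)
  then have "lA_seminorm A i = (\<lambda>x. norm (x k))"
    by (simp add: fun_eq_iff lA_seminorm_coord)
  then show ?thesis
    unfolding lA_seminorms_def by blast
next
  case (3 n)
  then have "lA_seminorm A i = (\<lambda>x. SUP m. norm (\<Sum>k\<le>m. A n k * x k))"
    by (simp add: fun_eq_iff lA_seminorm_row row_partial_sum_def)
  then show ?thesis
    unfolding lA_seminorms_def by blast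
qed

context
  fixes A :: "nat \<Rightarrow> nat \<Rightarrow> complex" and X :: "nat \<Rightarrow> nat \<Rightarrow> complex" and x :: "nat \<Rightarrow> complex"
  assumes mem: "\<And>j. X j \<in> lA A"
    and cauchy: "\<And>i \<epsilon>. \<epsilon> > 0 \<Longrightarrow> \<exists>J. \<forall>j\<ge>J. \<forall>j'\<ge>J. lA_seminorm A i (\<lambda>k. X j k - X j' k) < \<epsilon>"
    and coords: "\<And>k. (\<lambda>j. X j k) \<longlonglongrightarrow> x k"
begin

lemma uniform_limit_row_partial_sums:
  "uniform_limit UNIV (\<lambda>j m. row_partial_sum A n m (X j)) (\<lambda>m. row_partial_sum A n m x) sequentially"
proof (rule uniform_limitI)
  fix \<epsilon> :: real assume "\<epsilon> > 0"
  then obtain J where J: "\<forall>j\<ge>J. \<forall>j'\<ge>J. lA_seminorm A (Suc (Suc (2 * n))) (\<lambda>k. X j k - X j' k) < \<epsilon> / 2"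
    using cauchy[where i="Suc (Suc (2 * n))" and \<epsilon>="\<epsilon> / 2"] by auto
  have "norm (row_partial_sum A n m (X j) - row_partial_sum A n m x) \<le> \<epsilon> / 2" if "j \<ge> J" for j m
  proof (rule Lim_bounded)
    show "(\<lambda>j'. norm (row_partial_sum A n m (X j) - row_partial_sum A n m (X j')))
        \<longlonglongrightarrow> norm (row_partial_sum A n m (X j) - row_partial_sum A n m x)"
      unfolding row_partial_sum_def by (intro tendsto_intros coords)
    show "\<forall>j'\<ge>J. norm (row_partial_sum A n m (X j) - row_partial_sum A n m (X j')) \<le> \<epsilon> / 2"
    proof (intro allI impI)
      fix j' assume "j' \<ge> J"
      have "norm (row_partial_sum A n m (X j) - row_partial_sum A n m (X j'))
          \<le> lA_seminorm A (Suc (Suc (2 * n))) (\<lambda>k. X j k - X j' k)"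
        using norm_row_partial_sum_le[OF lA.diff_mem[OF mem mem]] by (simp add: row_partial_sum_diff)
      with J that \<open>j' \<ge> J\<close> show "norm (row_partial_sum A n m (X j) - row_partial_sum A n m (X j')) \<le> \<epsilon> / 2"
        by fastforce
    qed
  qed
  then have "\<forall>j\<ge>J. \<forall>m\<in>UNIV. dist (row_partial_sum A n m (X j)) (row_partial_sum A n m x) < \<epsilon>"
    using \<open>\<epsilon> > 0\<close> by (auto simp: dist_norm intro: le_less_trans[of _ "\<epsilon> / 2"])
  then show "\<forall>\<^sub>F j in sequentially. \<forall>m\<in>UNIV.
      dist (row_partial_sum A n m (X j)) (row_partial_sum A n m x) < \<epsilon>"
    unfolding eventually_sequentially by blast
qed

lemma row_sum_limit:
  shows "summable (\<lambda>k. A n k * x k)" and "(\<lambda>j. row_sum A n (X j)) \<longlonglongrightarrow> row_sum A n x"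
proof -
  have "Cauchy (\<lambda>j. row_sum A n (X j))"
  proof (rule metric_CauchyI)
    fix \<epsilon> :: real assume "\<epsilon> > 0"
    then obtain J where J: "\<forall>j\<ge>J. \<forall>j'\<ge>J. lA_seminorm A (Suc (Suc (2 * n))) (\<lambda>k. X j k - X j' k) < \<epsilon>"
      using cauchy[where i="Suc (Suc (2 * n))"] by blast
    have "dist (row_sum A n (X j)) (row_sum A n (X j')) < \<epsilon>" if "j \<ge> J" "j' \<ge> J" for j j'
    proof -
      have "norm (row_sum A n (X j) - row_sum A n (X j'))
          \<le> lA_seminorm A (Suc (Suc (2 * n))) (\<lambda>k. X j k - X j' k)"
        using norm_row_sum_le[OF lA.diff_mem[OF mem[of j] mem[of j']]] by (simp add: row_sum_diff[OF mem mem])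
      moreover have "lA_seminorm A (Suc (Suc (2 * n))) (\<lambda>k. X j k - X j' k) < \<epsilon>"
        using J that by blast
      ultimately show ?thesis
        by (simp add: dist_norm)
    qed
    then show "\<exists>M. \<forall>j\<ge>M. \<forall>j'\<ge>M. dist (row_sum A n (X j)) (row_sum A n (X j')) < \<epsilon>"
      by blast
  qed
  then obtain L where L: "(\<lambda>j. row_sum A n (X j)) \<longlonglongrightarrow> L"
    using Cauchy_convergent unfolding convergent_def by blast
  have "\<forall>\<^sub>F j in sequentially. (\<lambda>m. row_partial_sum A n m (X j)) \<longlonglongrightarrow> row_sum A n (X j)"
    by (intro always_eventually allI row_partial_sum_tendsto) (use mem in \<open>simp add: lA_iff\<close>)
  then have "(\<lambda>m. row_partial_sum A n m x) \<longlonglongrightarrow> L"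
    using L uniform_limit_row_partial_sums by (rule swap_uniform_limit') simp_all
  then have "(\<lambda>k. A n k * x k) sums L"
    unfolding sums_def row_partial_sum_def lessThan_Suc_atMost[symmetric] by (rule LIMSEQ_imp_Suc)
  then show "summable (\<lambda>k. A n k * x k)"
    by (rule sums_summable)
  show "(\<lambda>j. row_sum A n (X j)) \<longlonglongrightarrow> row_sum A n x"
    using L sums_unique[OF \<open>(\<lambda>k. A n k * x k) sums L\<close>] by (simp add: row_sum_def)
qed

lemma l1_distance_limit:
  assumes "\<epsilon> > 0"
  shows "\<exists>J. \<forall>j\<ge>J. summable (\<lambda>n. norm (row_sum A n (X j) - row_sum A n x))
      \<and> (\<Sum>n. norm (row_sum A n (X j) - row_sum A n x)) \<le> \<epsilon>"
proof -
  obtain J where J: "\<forall>j\<ge>J. \<forall>j'\<ge>J. lA_seminorm A 0 (\<lambda>k. X j k - X j' k) < \<epsilon>"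
    using cauchy[where i=0] assms by blast
  have bound: "summable (\<lambda>n. norm (row_sum A n (X j) - row_sum A n (X j')))
      \<and> (\<Sum>n. norm (row_sum A n (X j) - row_sum A n (X j'))) \<le> \<epsilon>" if "j \<ge> J" "j' \<ge> J" for j j'
    using lA.diff_mem[OF mem[of j] mem[of j']] J that
    by (auto simp: lA_iff lA_seminorm_l1 row_sum_diff[OF mem mem] less_imp_le)
  have "summable (\<lambda>n. norm (row_sum A n (X j) - row_sum A n x))
      \<and> (\<Sum>n. norm (row_sum A n (X j) - row_sum A n x)) \<le> \<epsilon>" if "j \<ge> J" for j
    using summable_norm_diff_limit[where u="\<lambda>j n. row_sum A n (X j)" and J=J and j=j,
        OF row_sum_limit(2) bound[OF that]] by simp
  then show ?thesis
    by blast
qed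

lemma limit_in_lA: "x \<in> lA A"
proof -
  obtain J where J: "summable (\<lambda>n. norm (row_sum A n (X J) - row_sum A n x))"
    using l1_distance_limit[of 1] by auto
  have "summable (\<lambda>n. norm (row_sum A n (X J)) + norm (row_sum A n (X J) - row_sum A n x))"
    using mem[of J] J by (intro summable_add) (auto simp: lA_iff)
  then have "summable (\<lambda>n. norm (row_sum A n x))"
    by (rule summable_comparison_test')
      (use norm_triangle_sub[of "row_sum A n x" "row_sum A n (X J)" for n] in \<open>simp add: norm_minus_commute\<close>)
  then show ?thesis
    using row_sum_limit(1) by (simp add: lA_iff)
qed

lemma lA_seminorm_limit: "(\<lambda>j. lA_seminorm A i (\<lambda>k. X j k - x k)) \<longlonglongrightarrow> 0"
proof (cases i rule: lA_seminorm_index_cases)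
  case 1
  show ?thesis
  proof (rule nonneg_tendsto_zeroI)
    show "0 \<le> lA_seminorm A i (\<lambda>k. X j k - x k)" for j
      by (rule lA.seminorm_nonneg[OF lA.diff_mem[OF mem limit_in_lA]])
    fix \<epsilon> :: real assume "\<epsilon> > 0"
    then obtain J where "\<forall>j\<ge>J. (\<Sum>n. norm (row_sum A n (X j) - row_sum A n x)) \<le> \<epsilon>"
      using l1_distance_limit by blast
    then have "\<forall>j\<ge>J. lA_seminorm A i (\<lambda>k. X j k - x k) \<le> \<epsilon>"
      using 1 by (simp add: lA_seminorm_l1 row_sum_diff[OF mem limit_in_lA])
    then show "\<exists>J. \<forall>j\<ge>J. lA_seminorm A i (\<lambda>k. X j k - x k) \<le> \<epsilon>"
      by blast
  qed
next
  case (2 k)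
  show ?thesis
    using tendsto_norm[OF LIM_zero[OF coords[of k]]] 2 by (simp add: lA_seminorm_coord)
next
  case (3 n)
  show ?thesis
  proof (rule nonneg_tendsto_zeroI)
    show "0 \<le> lA_seminorm A i (\<lambda>k. X j k - x k)" for j
      by (rule lA.seminorm_nonneg[OF lA.diff_mem[OF mem limit_in_lA]])
    fix \<epsilon> :: real assume "\<epsilon> > 0"
    then have "\<forall>\<^sub>F j in sequentially. \<forall>m\<in>UNIV.
        dist (row_partial_sum A n m (X j)) (row_partial_sum A n m x) < \<epsilon>"
      by (rule uniform_limitD[OF uniform_limit_row_partial_sums])
    then obtain J where J: "\<forall>j\<ge>J. \<forall>m. dist (row_partial_sum A n m (X j)) (row_partial_sum A n m x) < \<epsilon>"
      by (auto simp: eventually_sequentially)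
    have "lA_seminorm A i (\<lambda>k. X j k - x k) \<le> \<epsilon>" if "j \<ge> J" for j
      unfolding 3 lA_seminorm_row row_partial_sum_diff
      using J that by (intro cSUP_least) (auto simp: dist_norm less_imp_le)
    then show "\<exists>J. \<forall>j\<ge>J. lA_seminorm A i (\<lambda>k. X j k - x k) \<le> \<epsilon>"
      by blast
  qed
qed

end

lemma lA_seminorm_complete:
  assumes mem: "\<And>j. X j \<in> lA A"
    and cauchy: "\<And>i \<epsilon>. \<epsilon> > 0 \<Longrightarrow> \<exists>J. \<forall>j\<ge>J. \<forall>j'\<ge>J. lA_seminorm A i (\<lambda>k. X j k - X j' k) < \<epsilon>"
  shows "\<exists>x\<in>lA A. \<forall>i. (\<lambda>j. lA_seminorm A i (\<lambda>k. X j k - x k)) \<longlonglongrightarrow> 0"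
proof -
  have "Cauchy (\<lambda>j. X j k)" for k
  proof (rule metric_CauchyI)
    fix \<epsilon> :: real assume "\<epsilon> > 0"
    then obtain J where "\<forall>j\<ge>J. \<forall>j'\<ge>J. lA_seminorm A (Suc (2 * k)) (\<lambda>k. X j k - X j' k) < \<epsilon>"
      using cauchy by blast
    then show "\<exists>J. \<forall>j\<ge>J. \<forall>j'\<ge>J. dist (X j k) (X j' k) < \<epsilon>"
      by (auto simp: lA_seminorm_coord dist_norm)
  qed
  then have coords: "(\<lambda>j. X j k) \<longlonglongrightarrow> lim (\<lambda>j. X j k)" for k
    by (simp add: Cauchy_convergent_iff convergent_LIMSEQ_iff)
  have "(\<lambda>k. lim (\<lambda>j. X j k)) \<in> lA A"
    using mem cauchy coords by (rule limit_in_lA)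
  moreover have "(\<lambda>j. lA_seminorm A i (\<lambda>k. X j k - lim (\<lambda>j. X j k))) \<longlonglongrightarrow> 0" for i
    using mem cauchy coords by (rule lA_seminorm_limit)
  ultimately show ?thesis
    by (intro bexI[of _ "\<lambda>k. lim (\<lambda>j. X j k)"]) auto
qed

lemma mcomplete_lA: "lA.frechet.mcomplete A"
  by (rule lA.mcomplete_if_seminorm_complete, rule lA_seminorm_complete)

lemma topspace_lA_top: "topspace (lA_top A) = lA A"
proof -
  have "x \<in> {z \<in> lA A. lA_seminorm A 0 (\<lambda>k. z k - x k) < 1}" if "x \<in> lA A" for x
    using that by (simp add: lA.seminorm_zero)
  then have "lA A \<subseteq> \<Union> {{x \<in> lA A. p (\<lambda>k. x k - y k) < r} | p y r. p \<in> lA_seminorms A \<and> y \<in> lA A}"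
    using lA_seminorm_in_lA_seminorms[of A 0] by blast
  then show ?thesis
    unfolding lA_top_def by auto
qed

lemma openin_lA_top_seminorm_ball:
  assumes "x \<in> lA A"
  shows "openin (lA_top A) (\<Inter>i\<le>N. {z \<in> lA A. lA_seminorm A i (\<lambda>k. z k - x k) < \<eta>})"
proof -
  let ?S = "{{x \<in> lA A. p (\<lambda>k. x k - y k) < r} | p y r. p \<in> lA_seminorms A \<and> y \<in> lA A}"
  have "generate_topology_on ?S (\<Inter>i\<le>N. {z \<in> lA A. lA_seminorm A i (\<lambda>k. z k - x k) < \<eta>})"
  proof (rule generate_topology_on_Inter)
    fix K assume "K \<in> (\<lambda>i. {z \<in> lA A. lA_seminorm A i (\<lambda>k. z k - x k) < \<eta>}) ` {..N}"
    then have "K \<in> ?S"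
      using lA_seminorm_in_lA_seminorms assms by blast
    then show "generate_topology_on ?S K"
      by (rule generate_topology_on.Basis)
  qed auto
  then show ?thesis
    unfolding lA_top_def openin_subtopology openin_topology_generated_by_iff by blast
qed

lemma continuous_map_lA_top_if_seminorm_bounded:
  assumes "lA.seminorm_bounded A g"
    and diff: "\<And>x y. x \<in> lA A \<Longrightarrow> y \<in> lA A \<Longrightarrow> g (\<lambda>k. x k - y k) = g x - g y"
  shows "continuous_map (lA_top A) euclidean g"
proof -
  obtain C N where "C > 0" and C: "\<And>x. x \<in> lA A \<Longrightarrow> norm (g x) \<le> C * lA.seminorm_sum A N x"
    using lA.seminorm_boundedE[OF assms(1)] by blast
  have "openin (lA_top A) {x \<in> lA A. g x \<in> U}" if "open U" for U
    unfolding openin_subopen[of _ "{x \<in> lA A. g x \<in> U}"]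
  proof
    fix x assume x: "x \<in> {x \<in> lA A. g x \<in> U}"
    then obtain \<epsilon> where "\<epsilon> > 0" and ball: "ball (g x) \<epsilon> \<subseteq> U"
      using \<open>open U\<close> open_contains_ball by blast
    define \<eta> where "\<eta> = \<epsilon> / C / (real N + 1)"
    have "\<eta> > 0"
      using \<open>\<epsilon> > 0\<close> \<open>C > 0\<close> by (simp add: \<eta>_def)
    define W where "W = (\<Inter>i\<le>N. {z \<in> lA A. lA_seminorm A i (\<lambda>k. z k - x k) < \<eta>})"
    have "g z \<in> U" if z: "z \<in> W" for z
    proof -
      have zA: "z \<in> lA A" and "\<And>i. i \<le> N \<Longrightarrow> lA_seminorm A i (\<lambda>k. z k - x k) < \<eta>"
        using z by (auto simp: W_def)
      then have "lA.seminorm_sum A N (\<lambda>k. z k - x k) < (\<Sum>i\<le>N. \<eta>)"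
        unfolding lA.seminorm_sum_def by (intro sum_strict_mono) auto
      also have "\<dots> = \<epsilon> / C"
        by (simp add: \<eta>_def add.commute)
      finally have "C * lA.seminorm_sum A N (\<lambda>k. z k - x k) < \<epsilon>"
        using \<open>C > 0\<close> by (simp add: pos_less_divide_eq mult.commute)
      moreover have "dist (g x) (g z) \<le> C * lA.seminorm_sum A N (\<lambda>k. z k - x k)"
        using C[OF lA.diff_mem[OF zA]] diff[OF zA] x by (simp add: dist_norm norm_minus_commute)
      ultimately show ?thesis
        using ball by auto
    qed
    moreover have "x \<in> W"
      using x \<open>\<eta> > 0\<close> by (simp add: W_def lA.seminorm_zero)
    moreover have "openin (lA_top A) W"
      unfolding W_def using x by (intro openin_lA_top_seminorm_ball) simp
    ultimately show "\<exists>T. openin (lA_top A) T \<and> x \<in> T \<and> T \<subseteq> {x \<in> lA A. g x \<in> U}"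
      by (auto simp: W_def)
  qed
  then show ?thesis
    by (auto simp: continuous_map topspace_lA_top)
qed

section \<open>Matrices with column sums one\<close>

lemma row_partial_sum_seminorm_bounded: "lA.seminorm_bounded A (row_partial_sum D n m)"
proof -
  have "norm (row_partial_sum D n m x) \<le> (\<Sum>k\<le>m. norm (D n k)) * lA.seminorm_sum A (Suc (2 * m)) x"
    if x: "x \<in> lA A" for x
  proof -
    have "norm (x k) \<le> lA.seminorm_sum A (Suc (2 * m)) x" if "k \<le> m" for k
      using lA.seminorm_le_seminorm_sum[OF x, of "Suc (2 * k)" "Suc (2 * m)"] that
      by (simp add: lA_seminorm_coord)
    then have "norm (row_partial_sum D n m x) \<le> (\<Sum>k\<le>m. norm (D n k) * lA.seminorm_sum A (Suc (2 * m)) x)"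
      unfolding row_partial_sum_def
      by (intro order_trans[OF norm_sum] sum_mono) (simp add: norm_mult mult_left_mono)
    then show ?thesis
      by (simp add: sum_distrib_right)
  qed
  then show ?thesis
    unfolding lA.seminorm_bounded_def by blast
qed

lemma row_sum_seminorm_bounded:
  assumes "lA D = lA A"
  shows "lA.seminorm_bounded A (row_sum D n)"
proof (rule lA.seminorm_bounded_pointwise_limit[OF mcomplete_lA])
  fix x assume "x \<in> lA A"
  with assms have "x \<in> lA D"
    by simp
  then show "(\<lambda>m. row_partial_sum D n m x) \<longlonglongrightarrow> row_sum D n x"
    by (intro row_partial_sum_tendsto) (simp add: lA_iff)
qed (simp_all add: row_partial_sum_diff row_partial_sum_scale row_partial_sum_seminorm_bounded)

definition transform_sum :: "(nat \<Rightarrow> nat \<Rightarrow> complex) \<Rightarrow> (nat \<Rightarrow> complex) \<Rightarrow> complex" where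
  "transform_sum D x = (\<Sum>n. row_sum D n x)"

lemma summable_row_sum: "x \<in> lA D \<Longrightarrow> summable (\<lambda>n. row_sum D n x)"
  by (auto simp: lA_iff intro: summable_norm_cancel)

lemma transform_sum_add:
  "x \<in> lA D \<Longrightarrow> y \<in> lA D \<Longrightarrow> transform_sum D (\<lambda>k. x k + y k) = transform_sum D x + transform_sum D y"
  by (simp add: transform_sum_def row_sum_add suminf_add summable_row_sum)

lemma transform_sum_diff:
  "x \<in> lA D \<Longrightarrow> y \<in> lA D \<Longrightarrow> transform_sum D (\<lambda>k. x k - y k) = transform_sum D x - transform_sum D y"
  by (simp add: transform_sum_def row_sum_diff suminf_diff summable_row_sum)

lemma transform_sum_scale: "x \<in> lA D \<Longrightarrow> transform_sum D (\<lambda>k. c * x k) = c * transform_sum D x"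
  by (simp add: transform_sum_def row_sum_scale suminf_mult summable_row_sum)

lemma transform_sum_seminorm_bounded:
  assumes "lA D = lA A"
  shows "lA.seminorm_bounded A (transform_sum D)"
proof (rule lA.seminorm_bounded_pointwise_limit[OF mcomplete_lA, where h="\<lambda>J x. \<Sum>n<J. row_sum D n x"])
  show "lA.seminorm_bounded A (\<lambda>x. \<Sum>n<J. row_sum D n x)" for J
    by (intro lA.seminorm_bounded_sum row_sum_seminorm_bounded[OF assms]) simp
  fix x assume "x \<in> lA A"
  then show "(\<lambda>J. \<Sum>n<J. row_sum D n x) \<longlonglongrightarrow> transform_sum D x"
    using assms unfolding transform_sum_def by (intro summable_LIMSEQ summable_row_sum) simp
qed (use assms in \<open>simp_all add: row_sum_diff row_sum_scale sum_subtractf sum_distrib_left\<close>)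

lemma transform_sum_in_lA_dual:
  assumes "lA D = lA A"
  shows "transform_sum D \<in> lA_dual A"
  unfolding lA_dual_def
  using assms transform_sum_add transform_sum_scale
    continuous_map_lA_top_if_seminorm_bounded[OF transform_sum_seminorm_bounded[OF assms]]
  by (simp add: transform_sum_diff)

lemma transform_sum_delta:
  assumes "\<And>k. (\<lambda>n. D n k) sums 1"
  shows "transform_sum D (delta j) = 1"
proof -
  have "(\<lambda>k. D n k * delta j k) = (\<lambda>k. if k = j then D n k else 0)" for n
    by (simp add: delta_def fun_eq_iff)
  then have "row_sum D n (delta j) = D n j" for n
    using sums_unique[OF sums_single[of j "D n"]] by (simp add: row_sum_def)
  then show ?thesis
    using sums_unique[OF assms[of j]] by (simp add: transform_sum_def)
qed

lemma double_sum_Icc: "2 * (\<Sum>k\<in>{p + 1..p + d}. k) = d * (2 * p + d + 1)" for p d :: nat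
proof (induction d)
  case (Suc d)
  have "{p + 1..p + Suc d} = insert (p + Suc d) {p + 1..p + d}"
    by auto
  with Suc show ?case
    by (simp add: algebra_simps)
qed simp

lemma deferred_mean_of_nat:
  assumes "p < q"
  shows "1 / of_nat (q - p) * (\<Sum>k\<in>{p + 1..q}. of_nat k) = (of_nat (p + q + 1) / 2 :: complex)"
proof -
  obtain d where q: "q = p + d" and "d > 0"
    using assms less_imp_add_positive by blast
  have "2 * of_nat (\<Sum>k\<in>{p + 1..q}. k) = (of_nat (d * (2 * p + d + 1)) :: complex)"
    unfolding q double_sum_Icc[symmetric] by simp
  with \<open>d > 0\<close> show ?thesis
    by (simp add: q field_simps)
qed

lemma deferred_means_not_Bseq:
  assumes "filterlim q at_top sequentially"
  shows "\<not> Bseq (\<lambda>n. of_nat (p n + q n + 1) / 2 :: complex)"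
proof
  assume "Bseq (\<lambda>n. of_nat (p n + q n + 1) / 2 :: complex)"
  then obtain K where K: "\<forall>n. norm (of_nat (p n + q n + 1) / 2 :: complex) \<le> K"
    using BseqE by blast
  obtain n where "q n \<ge> nat \<lceil>2 * K\<rceil> + 1"
    using assms by (auto simp: filterlim_at_top eventually_sequentially)
  then have "real (q n) > 2 * K"
    using real_nat_ceiling_ge[of "2 * K"] by linarith
  moreover have "norm (of_nat (p n + q n + 1) / 2 :: complex) = real (p n + q n + 1) / 2"
    by (simp only: norm_divide norm_of_nat norm_numeral)
  then have "real (p n + q n + 1) / 2 \<le> K"
    using K by metis
  ultimately show False
    by simp
qed

theorem mainTheorem1:
  fixes p q :: "nat \<Rightarrow> nat" and A :: "nat \<Rightarrow> nat \<Rightarrow> complex"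
  assumes "\<And>n. p n < q n"
    and "filterlim q at_top sequentially"
    and "\<forall>j. delta j \<in> lA A"
    and "eseq \<in> lA A"
    and "deferred_cesaro_conull p q A"
  shows "\<not> l_replaceable A"
proof
  assume "l_replaceable A"
  then obtain D where LD: "lA D = lA A" and cols: "\<And>k. (\<lambda>n. D n k) sums 1"
    unfolding l_replaceable_def by blast
  have "(\<lambda>n. 1 / of_nat (q n - p n) * (\<Sum>k\<in>{p n + 1..q n}. \<Sum>j<k. transform_sum D (delta j)))
      \<longlonglongrightarrow> transform_sum D eseq"
    using assms(5) transform_sum_in_lA_dual[OF LD] unfolding deferred_cesaro_conull_def by blast
  moreover have "1 / of_nat (q n - p n) * (\<Sum>k\<in>{p n + 1..q n}. \<Sum>j<k. transform_sum D (delta j))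
      = of_nat (p n + q n + 1) / 2" for n
    using deferred_mean_of_nat[OF assms(1)] by (simp add: transform_sum_delta[OF cols])
  ultimately have "(\<lambda>n. of_nat (p n + q n + 1) / 2 :: complex) \<longlonglongrightarrow> transform_sum D eseq"
    by (simp only:)
  then have "Bseq (\<lambda>n. of_nat (p n + q n + 1) / 2 :: complex)"
    by (intro convergent_imp_Bseq convergentI)
  with deferred_means_not_Bseq[OF assms(2)] show False
    by blast
qed

end
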